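(* Let $\rho>1$. There exists $C=C(\rho)$ such that for all $\sigma_0,\sigma_1,\sigma_2\in\mathbb{R}$, \[ \int_{-\infty}^{\infty}\frac{dx}{\langle x^3+\sigma_2x^2+\sigma_1x+\sigma_0\rangle^{\rho}}\le C\langle3\sigma_1-\sigma_2^2\rangle^{-\frac14}. \]
   Context: $\langle x\rangle=1+|x|$. *)

theory Defs
  imports "HOL-Analysis.Analysis"
begin

definition jb :: "real \<Rightarrow> real" where
  "jb x = 1 + \<bar>x\<bar>"

end

theory Submission
  imports Defs
begin

text \<open>Completing the cube, \<open>x\<^sup>3 + \<sigma>\<^sub>2 x\<^sup>2 + \<sigma>\<^sub>1 x + \<sigma>\<^sub>0 = (x + s)\<^sup>3 - 3c(x + s) + e\<close> with
  \<open>s = \<sigma>\<^sub>2/3\<close> and \<open>9c = \<sigma>\<^sub>2\<^sup>2 - 3\<sigma>\<^sub>1\<close>, so \<open>f' = 3((x + s)\<^sup>2 - c)\<close> changes sign at most twice.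
  On an interval where \<open>f\<close> is monotone, the substitution \<open>u = f x\<close> bounds
  \<open>\<integral> |f'| \<langle>f\<rangle>\<^sup>-\<^sup>\<rho>\<close> by \<open>\<integral>\<langle>u\<rangle>\<^sup>-\<^sup>\<rho> du = 2/(\<rho> - 1)\<close>, hence \<open>\<integral> |f'| \<langle>f\<rangle>\<^sup>-\<^sup>\<rho> \<le> 6/(\<rho> - 1)\<close> on the
  whole line. Off the set where \<open>|(x + s)\<^sup>2 - c| < \<epsilon>\<close>, which has measure at most
  \<open>4\<epsilon>/\<surd>(|c| + \<epsilon>)\<close>, we have \<open>|f'| \<ge> 3\<epsilon>\<close> and so \<open>\<langle>f\<rangle>\<^sup>-\<^sup>\<rho> \<le> |f'| \<langle>f\<rangle>\<^sup>-\<^sup>\<rho> / (3\<epsilon>)\<close>.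
  The choice \<open>\<epsilon> = \<langle>c\<rangle>\<^sup>1\<^sup>/\<^sup>4\<close> makes both contributions \<open>O(\<langle>c\<rangle>\<^sup>-\<^sup>1\<^sup>/\<^sup>4)\<close>.\<close>

definition jb_primitive :: "real \<Rightarrow> real \<Rightarrow> real" where
  "jb_primitive r u = sgn u * (1 - jb u powr (1 - r)) / (r - 1)"

lemma has_real_derivative_at_split:
  fixes f :: "real \<Rightarrow> real"
  assumes "(f has_real_derivative D) (at x within {..x})"
    and "(f has_real_derivative D) (at x within {x..})"
  shows "(f has_real_derivative D) (at x)"
  using assms unfolding has_field_derivative_iff by (intro Lim_Un_univ[of _ _ _ "{..x}" "{x..}"]) auto

lemma has_real_derivative_jb_primitive:
  assumes "1 < r"
  shows "(jb_primitive r has_real_derivative 1 / jb u powr r) (at u)"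
proof -
  define P where "P v = (1 - (1 + v) powr (1 - r)) / (r - 1)" for v
  define N where "N v = - P (- v)" for v
  have P': "(P has_real_derivative 1 / (1 + v) powr r) (at v)" if "-1 < v" for v
  proof -
    have "(P has_real_derivative - ((1 - r) * (1 + v) powr (1 - r - 1)) / (r - 1)) (at v)"
      unfolding P_def using that assms by (auto intro!: derivative_eq_intros)
    also have "- ((1 - r) * (1 + v) powr (1 - r - 1)) / (r - 1) = 1 / (1 + v) powr r"
      using assms that by (simp add: powr_minus_divide field_simps)
    finally show ?thesis .
  qed
  have N': "(N has_real_derivative 1 / (1 - v) powr r) (at v)" if "v < 1" for v
  proof -
    have "((\<lambda>v. - P (- v)) has_real_derivative - (1 / (1 + - v) powr r * - 1)) (at v)"
      using that by (intro DERIV_minus DERIV_chain2[OF P'] derivative_intros) simp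
    then show ?thesis
      by (simp add: N_def[abs_def])
  qed
  have on_nonneg: "jb_primitive r v = P v" if "0 \<le> v" for v
    using that by (cases "v = 0") (simp_all add: jb_primitive_def jb_def P_def)
  have on_nonpos: "jb_primitive r v = N v" if "v \<le> 0" for v
    using that by (cases "v = 0") (simp_all add: jb_primitive_def jb_def N_def P_def minus_divide_left)
  consider "0 < u" | "u < 0" | "u = 0"
    by linarith
  then show ?thesis
  proof cases
    case 1
    then have "(P has_real_derivative 1 / jb u powr r) (at u)"
      using P'[of u] by (simp add: jb_def)
    then show ?thesis
      by (rule has_field_derivative_transform_within_open[where S = "{0<..}"]) (use 1 on_nonneg in auto)
  next
    case 2
    then have "(N has_real_derivative 1 / jb u powr r) (at u)"
      using N'[of u] by (simp add: jb_def)
    then show ?thesis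
      by (rule has_field_derivative_transform_within_open[where S = "{..<0}"]) (use 2 on_nonpos in auto)
  next
    case 3
    have "(N has_real_derivative 1 / jb u powr r) (at u within {..u})"
      "(P has_real_derivative 1 / jb u powr r) (at u within {u..})"
      using N'[of 0] P'[of 0] 3 by (simp_all add: jb_def has_field_derivative_at_within)
    then show ?thesis
      using on_nonpos on_nonneg 3
      by (intro has_real_derivative_at_split)
        (auto intro: has_field_derivative_transform_within[where d = 1])
  qed
qed

lemma abs_jb_primitive_le:
  assumes "1 < r"
  shows "\<bar>jb_primitive r u\<bar> \<le> 1 / (r - 1)"
proof -
  have "1 \<le> jb u"
    by (simp add: jb_def)
  then have bounds: "0 < jb u powr (1 - r)" "jb u powr (1 - r) \<le> 1"
    using assms powr_mono[of "1 - r" 0 "jb u"] by auto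
  have "\<bar>jb_primitive r u\<bar> = \<bar>sgn u\<bar> * ((1 - jb u powr (1 - r)) / (r - 1))"
    using bounds assms by (simp add: jb_primitive_def abs_mult)
  also have "\<dots> \<le> 1 * (1 / (r - 1))"
    using bounds assms by (intro mult_mono divide_right_mono) (auto simp: abs_sgn_eq)
  finally show ?thesis by simp
qed

definition constant_sign_on :: "(real \<Rightarrow> real) \<Rightarrow> real set \<Rightarrow> bool" where
  "constant_sign_on g A \<longleftrightarrow> (\<forall>x\<in>A. 0 \<le> g x) \<or> (\<forall>x\<in>A. g x \<le> 0)"

lemma constant_sign_on_subset: "constant_sign_on g A \<Longrightarrow> B \<subseteq> A \<Longrightarrow> constant_sign_on g B"
  unfolding constant_sign_on_def by blast

lemma has_integral_deriv_over_jb: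
  assumes "1 < r" "a \<le> b" "\<And>x. (f has_real_derivative f' x) (at x)"
  shows "((\<lambda>x. f' x / jb (f x) powr r) has_integral jb_primitive r (f b) - jb_primitive r (f a)) {a..b}"
proof -
  have "((\<lambda>x. jb_primitive r (f x)) has_real_derivative f' x / jb (f x) powr r) (at x)" for x
    using DERIV_chain2[OF has_real_derivative_jb_primitive[OF assms(1)] assms(3)] by simp
  then show ?thesis
    using assms(2) by (intro fundamental_theorem_of_calculus)
      (auto simp: has_real_derivative_iff_has_vector_derivative[symmetric]
        intro: has_field_derivative_at_within)
qed

lemma has_integral_abs_deriv_over_jb:
  assumes "1 < r" "a \<le> b" "\<And>x. (f has_real_derivative f' x) (at x)" "constant_sign_on f' {a..b}"
  shows "((\<lambda>x. \<bar>f' x\<bar> / jb (f x) powr r) has_integral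
    \<bar>jb_primitive r (f b) - jb_primitive r (f a)\<bar>) {a..b}"
proof -
  let ?I = "jb_primitive r (f b) - jb_primitive r (f a)"
  obtain \<sigma> :: real where \<sigma>: "\<bar>\<sigma>\<bar> = 1" "\<And>x. x \<in> {a..b} \<Longrightarrow> \<bar>f' x\<bar> = \<sigma> * f' x"
    using assms(4) unfolding constant_sign_on_def
    by (metis abs_minus_cancel abs_of_nonneg abs_of_nonpos abs_one mult_1 mult_minus1)
  have "((\<lambda>x. \<sigma> * (f' x / jb (f x) powr r)) has_integral \<sigma> * ?I) {a..b}"
    using has_integral_deriv_over_jb[OF assms(1-3)] by (rule has_integral_mult_right)
  then have I: "((\<lambda>x. \<bar>f' x\<bar> / jb (f x) powr r) has_integral \<sigma> * ?I) {a..b}"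
    by (rule has_integral_eq[rotated]) (simp add: \<sigma>(2))
  moreover have "0 \<le> \<sigma> * ?I"
    using I by (rule has_integral_nonneg) simp
  ultimately show ?thesis
    using \<sigma>(1) by (metis abs_mult abs_of_nonneg mult_1)
qed

lemma nn_integral_lborel_le_if_bounded_on_Icc:
  fixes h :: "real \<Rightarrow> ennreal"
  assumes h: "h \<in> borel_measurable borel"
    and bounded: "\<And>a b. a \<le> p \<Longrightarrow> q \<le> b \<Longrightarrow> (\<integral>\<^sup>+x. h x * indicator {a..b} x \<partial>lborel) \<le> B"
  shows "(\<integral>\<^sup>+x. h x \<partial>lborel) \<le> B"
proof -
  let ?h = "\<lambda>n x. h x * indicator {p - real n..q + real n} x"
  have "h x = (SUP n. ?h n x)" for x
  proof (rule antisym)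
    obtain n :: nat where "p - x \<le> real n" "x - q \<le> real n"
      using real_arch_simple[of "max (p - x) (x - q)"] by auto
    then have "?h n x = h x"
      by simp
    then show "h x \<le> (SUP n. ?h n x)"
      using SUP_upper[of n UNIV "\<lambda>n. ?h n x"] by simp
  qed (auto intro!: SUP_least simp: indicator_def)
  then have "(\<integral>\<^sup>+x. h x \<partial>lborel) = (\<integral>\<^sup>+x. (SUP n. ?h n x) \<partial>lborel)"
    by simp
  also have "\<dots> = (SUP n. (\<integral>\<^sup>+x. ?h n x \<partial>lborel))"
    using h by (intro nn_integral_monotone_convergence_SUP)
      (auto simp: incseq_def le_fun_def split: split_indicator)
  also have "\<dots> \<le> B"
    by (intro SUP_least bounded) auto
  finally show ?thesis .
qed

lemma nn_integral_abs_deriv_over_jb_le: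
  assumes r: "1 < r" and f: "\<And>x. (f has_real_derivative f' x) (at x)"
    and f': "continuous_on UNIV f'" and "p \<le> q"
    and signs: "constant_sign_on f' {..p}" "constant_sign_on f' {p..q}" "constant_sign_on f' {q..}"
  shows "(\<integral>\<^sup>+x. ennreal (\<bar>f' x\<bar> / jb (f x) powr r) \<partial>lborel) \<le> ennreal (6 / (r - 1))"
proof (rule nn_integral_lborel_le_if_bounded_on_Icc)
  let ?h = "\<lambda>x. \<bar>f' x\<bar> / jb (f x) powr r"
  have "continuous_on UNIV f"
    using f by (intro continuous_at_imp_continuous_on) (auto intro: DERIV_isCont)
  then have "continuous_on UNIV (\<lambda>x. jb (f x))"
    unfolding jb_def by (intro continuous_intros)
  then have "continuous_on UNIV ?h"
    using f' by (intro continuous_intros) (auto simp: jb_def add_pos_nonneg)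
  then show "(\<lambda>x. ennreal (?h x)) \<in> borel_measurable borel"
    by (intro measurable_compose[OF borel_measurable_continuous_onI measurable_ennreal])
  fix a b assume "a \<le> p" "q \<le> b"
  have piece: "\<exists>I. (?h has_integral I) {u..v} \<and> I \<le> 2 / (r - 1)"
    if "u \<le> v" "constant_sign_on f' {u..v}" for u v
    using has_integral_abs_deriv_over_jb[OF r that(1) f that(2)]
      abs_jb_primitive_le[OF r, of "f u"] abs_jb_primitive_le[OF r, of "f v"] by fastforce
  have "constant_sign_on f' {a..p}" "constant_sign_on f' {q..b}"
    using signs(1,3) by (auto elim: constant_sign_on_subset)
  then obtain I\<^sub>1 I\<^sub>2 I\<^sub>3 where
    I: "(?h has_integral I\<^sub>1) {a..p}" "(?h has_integral I\<^sub>2) {p..q}" "(?h has_integral I\<^sub>3) {q..b}"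
    and "I\<^sub>1 \<le> 2 / (r - 1)" "I\<^sub>2 \<le> 2 / (r - 1)" "I\<^sub>3 \<le> 2 / (r - 1)"
    using piece[of a p] piece[of p q] piece[of q b] signs(2) \<open>a \<le> p\<close> \<open>p \<le> q\<close> \<open>q \<le> b\<close>
    by blast
  then have "I\<^sub>1 + I\<^sub>2 + I\<^sub>3 \<le> 6 / (r - 1)"
    by linarith
  have "(?h has_integral I\<^sub>1 + I\<^sub>2) {a..q}"
    using \<open>a \<le> p\<close> \<open>p \<le> q\<close> I(1,2) by (rule has_integral_combine)
  with \<open>a \<le> p\<close> \<open>p \<le> q\<close> \<open>q \<le> b\<close> I(3) have "(?h has_integral I\<^sub>1 + I\<^sub>2 + I\<^sub>3) {a..b}"
    by (meson has_integral_combine order_trans)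
  with \<open>I\<^sub>1 + I\<^sub>2 + I\<^sub>3 \<le> 6 / (r - 1)\<close>
  show "(\<integral>\<^sup>+x. ennreal (?h x) * indicator {a..b} x \<partial>lborel) \<le> ennreal (6 / (r - 1))"
    by (subst nn_integral_has_integral_lebesgue') (auto intro: ennreal_leI)
qed

lemma nn_integral_le_emeasure_add:
  fixes g h :: "'a \<Rightarrow> ennreal"
  assumes "S \<in> sets M" "h \<in> borel_measurable M"
    and "\<And>x. g x \<le> 1" "\<And>x. x \<notin> S \<Longrightarrow> g x \<le> c * h x"
  shows "(\<integral>\<^sup>+x. g x \<partial>M) \<le> emeasure M S + c * (\<integral>\<^sup>+x. h x \<partial>M)"
proof -
  have "(\<integral>\<^sup>+x. g x \<partial>M) \<le> (\<integral>\<^sup>+x. indicator S x + c * h x \<partial>M)"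
    using assms(3,4) by (intro nn_integral_mono) (auto simp: add_increasing2 split: split_indicator)
  also have "\<dots> = emeasure M S + c * (\<integral>\<^sup>+x. h x \<partial>M)"
    using assms(1,2) by (simp add: nn_integral_add nn_integral_cmult)
  finally show ?thesis .
qed

lemma integrable_and_integral_le_of_nn_integral:
  fixes g :: "'a \<Rightarrow> real"
  assumes "g \<in> borel_measurable M" "\<And>x. 0 \<le> g x" "0 \<le> B"
    and "(\<integral>\<^sup>+x. ennreal (g x) \<partial>M) \<le> ennreal B"
  shows "integrable M g \<and> integral\<^sup>L M g \<le> B"
proof
  show "integrable M g"
    using assms by (intro integrableI_bounded) (auto simp: le_less_trans)
  have "integral\<^sup>L M g = enn2real (\<integral>\<^sup>+x. ennreal (g x) \<partial>M)"
    using assms by (intro integral_eq_nn_integral) auto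
  also have "\<dots> \<le> B"
    using enn2real_mono[OF assms(4)] assms(3) by simp
  finally show "integral\<^sup>L M g \<le> B" .
qed

lemma emeasure_near_shifted_square_le:
  fixes s c \<epsilon> :: real
  assumes "0 < \<epsilon>"
  shows "emeasure lborel {x. \<bar>(x + s)\<^sup>2 - c\<bar> < \<epsilon>} \<le> ennreal (4 * \<epsilon> / sqrt (\<bar>c\<bar> + \<epsilon>))"
proof -
  define A where "A = sqrt (\<bar>c\<bar> + \<epsilon>)"
  define B where "B = sqrt (max 0 (\<bar>c\<bar> - \<epsilon>))"
  have "0 < A" "0 \<le> B" "B \<le> A"
    using assms by (auto simp: A_def B_def)
  have "{x. \<bar>(x + s)\<^sup>2 - c\<bar> < \<epsilon>} \<subseteq> {-s-A..-s-B} \<union> {-s+B..-s+A}"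
  proof
    fix x assume "x \<in> {x. \<bar>(x + s)\<^sup>2 - c\<bar> < \<epsilon>}"
    moreover define y where "y = \<bar>x + s\<bar>\<^sup>2"
    ultimately have "0 \<le> y" "\<bar>y - c\<bar> < \<epsilon>"
      by simp_all
    then have "B\<^sup>2 \<le> y" "y \<le> A\<^sup>2"
      using assms by (auto simp: A_def B_def abs_if max_def split: if_splits)
    then have "B\<^sup>2 \<le> \<bar>x + s\<bar>\<^sup>2" "\<bar>x + s\<bar>\<^sup>2 \<le> A\<^sup>2"
      by (simp_all add: y_def)
    then have "B \<le> \<bar>x + s\<bar>" "\<bar>x + s\<bar> \<le> A"
      using \<open>0 < A\<close> by (auto intro: power2_le_imp_le)
    then show "x \<in> {-s-A..-s-B} \<union> {-s+B..-s+A}"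
      by (auto simp: abs_if split: if_splits)
  qed
  then have "emeasure lborel {x. \<bar>(x + s)\<^sup>2 - c\<bar> < \<epsilon>} \<le> emeasure lborel ({-s-A..-s-B} \<union> {-s+B..-s+A})"
    by (intro emeasure_mono) auto
  also have "\<dots> \<le> ennreal (A - B) + ennreal (A - B)"
    using emeasure_subadditive[of "{-s-A..-s-B}" lborel "{-s+B..-s+A}"] \<open>B \<le> A\<close> by simp
  also have "\<dots> \<le> ennreal (4 * \<epsilon> / A)"
  proof -
    have "(A - B) * A \<le> (A - B) * (A + B)"
      using \<open>0 \<le> B\<close> \<open>B \<le> A\<close> by (intro mult_left_mono) auto
    also have "\<dots> \<le> 2 * \<epsilon>"
      using assms by (simp add: A_def B_def algebra_simps power2_eq_square[symmetric] max_def)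
    finally have "2 * (A - B) \<le> 4 * \<epsilon> / A"
      using \<open>0 < A\<close> by (simp add: field_simps)
    then show ?thesis
      using \<open>B \<le> A\<close> by (simp flip: ennreal_plus)
  qed
  finally show ?thesis
    by (simp add: A_def)
qed

lemma nn_integral_abs_deriv_over_jb_cubic_le:
  fixes r s c e :: real
  assumes "1 < r"
  shows "(\<integral>\<^sup>+x. ennreal (\<bar>3 * ((x + s)\<^sup>2 - c)\<bar> / jb ((x + s) ^ 3 - 3 * c * (x + s) + e) powr r) \<partial>lborel)
    \<le> ennreal (6 / (r - 1))"
proof -
  define w where "w = sqrt (max 0 c)"
  have "0 \<le> w"
    by (simp add: w_def)
  have outer: "0 \<le> 3 * ((x + s)\<^sup>2 - c)" if "w \<le> \<bar>x + s\<bar>" for x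
  proof -
    have "c \<le> w\<^sup>2"
      by (simp add: w_def)
    also have "\<dots> \<le> \<bar>x + s\<bar>\<^sup>2"
      using that \<open>0 \<le> w\<close> by (intro power_mono) auto
    finally show ?thesis
      by simp
  qed
  have inner: "constant_sign_on (\<lambda>x. 3 * ((x + s)\<^sup>2 - c)) {-s-w..-s+w}"
  proof (cases "c \<le> 0")
    case True
    then have "c \<le> (x + s)\<^sup>2" for x
      using zero_le_power2[of "x + s"] by linarith
    then show ?thesis
      by (auto simp: constant_sign_on_def)
  next
    case False
    have "(x + s)\<^sup>2 \<le> c" if "x \<in> {-s-w..-s+w}" for x
    proof -
      have "\<bar>x + s\<bar>\<^sup>2 \<le> w\<^sup>2"
        using that by (intro power_mono) auto
      then show ?thesis
        using False by (simp add: w_def)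
    qed
    then show ?thesis
      by (auto simp: constant_sign_on_def)
  qed
  show ?thesis
  proof (rule nn_integral_abs_deriv_over_jb_le[OF assms _ _ _ _ inner])
    show "((\<lambda>x. (x + s) ^ 3 - 3 * c * (x + s) + e) has_real_derivative 3 * ((x + s)\<^sup>2 - c)) (at x)" for x
      by (auto intro!: derivative_eq_intros simp: algebra_simps)
    show "continuous_on UNIV (\<lambda>x. 3 * ((x + s)\<^sup>2 - c))"
      by (intro continuous_intros)
    show "-s-w \<le> -s+w"
      using \<open>0 \<le> w\<close> by simp
    show "constant_sign_on (\<lambda>x. 3 * ((x + s)\<^sup>2 - c)) {..-s-w}"
      "constant_sign_on (\<lambda>x. 3 * ((x + s)\<^sup>2 - c)) {-s+w..}"
      using outer unfolding constant_sign_on_def by force+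
  qed
qed

lemma integral_inverse_jb_cubic_le:
  fixes r s c e :: real
  assumes r: "1 < r"
  defines "f \<equiv> \<lambda>x. (x + s) ^ 3 - 3 * c * (x + s) + e"
  shows "integrable lborel (\<lambda>x. 1 / jb (f x) powr r) \<and>
    (\<integral>x. 1 / jb (f x) powr r \<partial>lborel) \<le> (4 + 2 / (r - 1)) * jb c powr (-1/4)"
proof (rule integrable_and_integral_le_of_nn_integral)
  define f' where "f' x = 3 * ((x + s)\<^sup>2 - c)" for x
  define \<epsilon> where "\<epsilon> = jb c powr (1/4)"
  define S where "S = {x. \<bar>(x + s)\<^sup>2 - c\<bar> < \<epsilon>}"
  have "1 \<le> jb c"
    by (simp add: jb_def)
  then have "1 \<le> \<epsilon>"
    by (simp add: \<epsilon>_def ge_one_powr_ge_zero)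
  have "continuous_on UNIV (\<lambda>x. jb (f x))"
    unfolding f_def jb_def by (intro continuous_intros)
  then have cont: "continuous_on UNIV (\<lambda>x. 1 / jb (f x) powr r)"
    "continuous_on UNIV (\<lambda>x. \<bar>f' x\<bar> / jb (f x) powr r)"
    unfolding f'_def by (auto intro!: continuous_intros simp: jb_def add_pos_nonneg)
  then show "(\<lambda>x. 1 / jb (f x) powr r) \<in> borel_measurable lborel"
    by (simp add: borel_measurable_continuous_onI)
  show "0 \<le> 1 / jb (f x) powr r" for x
    by simp
  show "0 \<le> (4 + 2 / (r - 1)) * jb c powr (-1/4)"
    using r by simp
  have S_le: "emeasure lborel S \<le> ennreal (4 * jb c powr (-1/4))"
  proof -
    have "emeasure lborel S \<le> ennreal (4 * \<epsilon> / sqrt (\<bar>c\<bar> + \<epsilon>))"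
      unfolding S_def using \<open>1 \<le> \<epsilon>\<close> by (intro emeasure_near_shifted_square_le) simp
    also have "\<dots> \<le> ennreal (4 * \<epsilon> / sqrt (jb c))"
      using \<open>1 \<le> \<epsilon>\<close> by (intro ennreal_leI divide_left_mono) (auto simp: jb_def)
    also have "4 * \<epsilon> / sqrt (jb c) = 4 * (jb c powr (1/4) / jb c powr (1/2))"
      using \<open>1 \<le> jb c\<close> by (simp add: \<epsilon>_def powr_half_sqrt)
    also have "\<dots> = 4 * jb c powr (-1/4)"
      by (simp flip: powr_diff)
    finally show ?thesis
      by simp
  qed
  have off_S: "ennreal (1 / jb (f x) powr r) \<le> ennreal (1 / (3 * \<epsilon>)) * ennreal (\<bar>f' x\<bar> / jb (f x) powr r)"
    if "x \<notin> S" for x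
  proof -
    have "3 * \<epsilon> \<le> \<bar>f' x\<bar>"
      using that by (auto simp: S_def f'_def abs_mult)
    then have "1 / jb (f x) powr r \<le> 1 / (3 * \<epsilon>) * (\<bar>f' x\<bar> / jb (f x) powr r)"
      using \<open>1 \<le> \<epsilon>\<close> by (simp add: field_simps jb_def)
    then have "ennreal (1 / jb (f x) powr r) \<le> ennreal (1 / (3 * \<epsilon>) * (\<bar>f' x\<bar> / jb (f x) powr r))"
      by (rule ennreal_leI)
    also have "\<dots> = ennreal (1 / (3 * \<epsilon>)) * ennreal (\<bar>f' x\<bar> / jb (f x) powr r)"
      using \<open>1 \<le> \<epsilon>\<close> by (intro ennreal_mult) auto
    finally show ?thesis .
  qed
  have "(\<integral>\<^sup>+x. ennreal (1 / jb (f x) powr r) \<partial>lborel)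
      \<le> emeasure lborel S + ennreal (1 / (3 * \<epsilon>)) * (\<integral>\<^sup>+x. ennreal (\<bar>f' x\<bar> / jb (f x) powr r) \<partial>lborel)"
  proof (rule nn_integral_le_emeasure_add)
    show "S \<in> sets lborel"
      unfolding S_def by measurable
    show "(\<lambda>x. ennreal (\<bar>f' x\<bar> / jb (f x) powr r)) \<in> borel_measurable lborel"
      using cont(2) by (simp add: borel_measurable_continuous_onI)
    show "ennreal (1 / jb (f x) powr r) \<le> 1" for x
      using r by (simp add: jb_def ge_one_powr_ge_zero)
  qed (rule off_S)
  also have "\<dots> \<le> ennreal (4 * jb c powr (-1/4)) + ennreal (1 / (3 * \<epsilon>)) * ennreal (6 / (r - 1))"
    unfolding f_def f'_def
    by (intro add_mono mult_left_mono S_le nn_integral_abs_deriv_over_jb_cubic_le r) auto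
  also have "\<dots> = ennreal (4 * jb c powr (-1/4) + 1 / (3 * \<epsilon>) * (6 / (r - 1)))"
    using r \<open>1 \<le> \<epsilon>\<close> by (simp add: ennreal_mult[symmetric] ennreal_plus[symmetric] del: ennreal_plus)
  also have "4 * jb c powr (-1/4) + 1 / (3 * \<epsilon>) * (6 / (r - 1)) = (4 + 2 / (r - 1)) * jb c powr (-1/4)"
  proof -
    have "jb c powr (-1/4) = 1 / \<epsilon>"
      by (simp add: \<epsilon>_def powr_minus_divide)
    then show ?thesis
      using r \<open>1 \<le> \<epsilon>\<close> by (simp add: field_simps)
  qed
  finally show "(\<integral>\<^sup>+x. ennreal (1 / jb (f x) powr r) \<partial>lborel) \<le> ennreal ((4 + 2 / (r - 1)) * jb c powr (-1/4))" .
qed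

lemma jb_powr_neg_le_scaled:
  fixes a x p :: real
  assumes "1 \<le> \<bar>a\<bar>" "0 \<le> p"
  shows "jb x powr (-p) \<le> \<bar>a\<bar> powr p * jb (a * x) powr (-p)"
proof -
  have "jb x powr (-p) = \<bar>a\<bar> powr p * (\<bar>a\<bar> * jb x) powr (-p)"
    using assms by (simp add: powr_mult powr_minus jb_def)
  also have "\<dots> \<le> \<bar>a\<bar> powr p * jb (a * x) powr (-p)"
    using assms by (intro mult_left_mono powr_mono2') (auto simp: jb_def abs_mult algebra_simps intro: add_pos_nonneg)
  finally show ?thesis .
qed

theorem lemma4p4:
  fixes \<rho> :: real
  assumes "\<rho> > 1"
  shows "\<exists>C. \<forall>\<sigma>0 \<sigma>1 \<sigma>2 :: real.
    integrable lborel (\<lambda>x. 1 / jb (x^3 + \<sigma>2 * x^2 + \<sigma>1 * x + \<sigma>0) powr \<rho>) \<and>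
    (\<integral>x. 1 / jb (x^3 + \<sigma>2 * x^2 + \<sigma>1 * x + \<sigma>0) powr \<rho> \<partial>lborel)
      \<le> C * jb (3 * \<sigma>1 - \<sigma>2^2) powr (-1/4)"
proof (intro exI[of _ "(4 + 2 / (\<rho> - 1)) * 9 powr (1/4)"] allI)
  fix \<sigma>0 \<sigma>1 \<sigma>2 :: real
  define s where "s = \<sigma>2 / 3"
  define c where "c = (\<sigma>2\<^sup>2 - 3 * \<sigma>1) / 9"
  define e where "e = \<sigma>0 - s ^ 3 + 3 * c * s"
  have depressed: "x^3 + \<sigma>2 * x^2 + \<sigma>1 * x + \<sigma>0 = (x + s) ^ 3 - 3 * c * (x + s) + e" for x
    by (simp add: s_def c_def e_def field_simps power2_eq_square power3_eq_cube)
  have "-9 * c = 3 * \<sigma>1 - \<sigma>2^2"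
    by (simp add: c_def)
  then have "jb c powr (-1/4) \<le> 9 powr (1/4) * jb (3 * \<sigma>1 - \<sigma>2^2) powr (-1/4)"
    using jb_powr_neg_le_scaled[of "-9" "1/4" c] by simp
  then have "(4 + 2 / (\<rho> - 1)) * jb c powr (-1/4)
      \<le> (4 + 2 / (\<rho> - 1)) * (9 powr (1/4) * jb (3 * \<sigma>1 - \<sigma>2^2) powr (-1/4))"
    using assms by (intro mult_left_mono) auto
  then have "(4 + 2 / (\<rho> - 1)) * jb c powr (-1/4)
      \<le> (4 + 2 / (\<rho> - 1)) * 9 powr (1/4) * jb (3 * \<sigma>1 - \<sigma>2^2) powr (-1/4)"
    by (simp only: mult.assoc)
  with integral_inverse_jb_cubic_le[OF assms, of s c e]
  show "integrable lborel (\<lambda>x. 1 / jb (x^3 + \<sigma>2 * x^2 + \<sigma>1 * x + \<sigma>0) powr \<rho>) \<and>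
    (\<integral>x. 1 / jb (x^3 + \<sigma>2 * x^2 + \<sigma>1 * x + \<sigma>0) powr \<rho> \<partial>lborel)
      \<le> (4 + 2 / (\<rho> - 1)) * 9 powr (1/4) * jb (3 * \<sigma>1 - \<sigma>2^2) powr (-1/4)"
    unfolding depressed by (meson order_trans)
qed

end
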